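(* Let $I\subset\mathbb{R}$ be an open interval, $s_0\in I$, and let $(\kappa_1,\kappa_2):I\to\mathbb{R}^2$ be continuous with an isolated zero at $s_0$, i.e. $(\kappa_1(s_0),\kappa_2(s_0))=(0,0)$ and $(\kappa_1(s),\kappa_2(s))\neq(0,0)$ for $s\neq s_0$ in $I$. Then the following are equivalent: (i) there exist a neighborhood $D\subset I$ of $s_0$ and continuous functions $\tilde r,\tilde\theta:D\to\mathbb{R}$ with $(\tilde r(s)\cos\tilde\theta(s),\,\tilde r(s)\sin\tilde\theta(s))=(\kappa_1(s),\kappa_2(s))$ for all $s\in D$; (ii) both $\theta^+$ and $\theta^-$ (defined in the context) exist and $\theta^+=\theta^-$.
   Context: Define $\hat\theta:\mathbb{R}^2\setminus\{(0,0)\}\to(-\tfrac{\pi}{2},\tfrac{\pi}{2}]$ by $\hat\theta(x,y)=\tan^{-1}(y/x)$ if $x\neq0$ and $\hat\theta(0,y)=\tfrac{\pi}{2}$ for $y\neq 0$ (so $\hat\theta$ is the angle of the line through the origin and $(x,y)$, taken in $(-\pi/2,\pi/2]$). Let $R(x,y)=\big(\tfrac{\sqrt2}{2}(x-y),\,\tfrac{\sqrt2}{2}(x+y)\big)$ be rotation by $\pi/4$. Set $\hat\theta^+:=\lim_{s\to s_0^+}\hat\theta(\kappa_1(s),\kappa_2(s))$ and $\hat\theta^+_{\pi/2}:=\lim_{s\to s_0^+}\hat\theta\big(R(\kappa_1(s),\kappa_2(s))\big)$ (these limits may fail to exist). Define $\theta^+:=\hat\theta^+$ if $\hat\theta^+$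 exists and $-\tfrac{\pi}{2}<\hat\theta^+<\tfrac{\pi}{2}$; $\theta^+:=\tfrac{\pi}{2}$ if $\hat\theta^+_{\pi/2}$ exists and equals $-\tfrac{\pi}{4}$; and $\theta^+$ is undefined otherwise. Define $\hat\theta^-$, $\hat\theta^-_{\pi/2}$, $\theta^-$ in the same way with $s\to s_0^-$ in place of $s\to s_0^+$. *)

theory Defs
  imports "HOL-Analysis.Analysis"
begin

text \<open>Angle of the line through the origin and (x,y), in (-pi/2, pi/2].
  The value at (0,0) is irrelevant (never used in the statement).\<close>
definition theta_hat :: "real \<Rightarrow> real \<Rightarrow> real" where
  "theta_hat x y = (if x = 0 then pi / 2 else arctan (y / x))"

definition rot :: "real \<times> real \<Rightarrow> real \<times> real" where
  "rot p = (sqrt 2 / 2 * (fst p - snd p), sqrt 2 / 2 * (fst p + snd p))"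

text \<open>theta_one_sided F k1 k2 t: the one-sided angle (theta^+ for F = at_right s0,
  theta^- for F = at_left s0) exists and equals t.\<close>
definition theta_one_sided ::
  "real filter \<Rightarrow> (real \<Rightarrow> real) \<Rightarrow> (real \<Rightarrow> real) \<Rightarrow> real \<Rightarrow> bool" where
  "theta_one_sided F k1 k2 t \<longleftrightarrow>
     ((((\<lambda>s. theta_hat (k1 s) (k2 s)) \<longlongrightarrow> t) F \<and> - (pi / 2) < t \<and> t < pi / 2)
      \<or> (t = pi / 2 \<and>
         ((\<lambda>s. case_prod theta_hat (rot (k1 s, k2 s))) \<longlongrightarrow> - (pi / 4)) F))"

end

theory Submission
  imports Defs
begin

text \<open>Write \<open>z = k1 + i k2\<close>. The angle of the line through \<open>0\<close> and \<open>z\<close> is half the argument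
  of \<open>z^2\<close>, so a one-sided angle exists with value \<open>t\<close> iff \<open>sgn (z^2)\<close> tends to \<open>e^(2it)\<close> from
  that side; the rotated angle only covers the vertical direction \<open>t = pi/2\<close>, where the
  unrotated one jumps. Hence (ii) says that \<open>sgn (z^2)\<close> has a limit at \<open>s0\<close>.
  A continuous polar representation \<open>z = r e^(i th)\<close> makes \<open>sgn (z^2) = e^(2i th)\<close> continuous.
  Conversely, if \<open>sgn (z^2)\<close> tends to \<open>c\<close>, the half angle
  \<open>psi = (Arg c + Arg (sgn (z^2) / c)) / 2\<close> is continuous near \<open>s0\<close>, because \<open>sgn (z^2) / c\<close> stays
  near \<open>1\<close>, away from the branch cut of \<open>Arg\<close>; and \<open>r = Re (z e^(-i psi))\<close> works because
  \<open>z e^(-i psi)\<close> is real, its square having sign \<open>1\<close>. The radius \<open>r\<close> may change sign at \<open>s0\<close>.\<close>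

lemma Arg_sgn [simp]: "Arg (sgn z) = Arg z"
  by (cases "z = 0") (simp_all add: sgn_eq)

lemma cis_squared: "cis a ^ 2 = cis (2 * a)"
  using Complex.DeMoivre[of a 2] by simp

lemma two_theta_hat_eq_Arg:
  assumes "(x, y) \<noteq> (0, 0)"
  shows "2 * theta_hat x y = Arg (Complex x y ^ 2)"
proof (cases "x = 0")
  case True
  then have "Complex x y ^ 2 = - of_real (y ^ 2)" and "y \<noteq> 0"
    using assms by (auto simp: complex_eq_iff power2_eq_square)
  then show ?thesis
    using True by (simp add: theta_hat_def Arg_real)
next
  case False
  define a where "a = arctan (y / x)"
  have cos_pos: "cos a > 0"
    unfolding a_def cos_arctan by (simp add: add_pos_nonneg)
  have polar: "Complex x y = of_real (x / cos a) * cis a"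
    using cos_pos False tan_arctan[of "y / x"]
    by (simp add: complex_eq_iff tan_def a_def field_simps)
  have "Arg (Complex x y ^ 2) = Arg (of_real ((x / cos a) ^ 2) * cis (2 * a))"
    unfolding polar power_mult_distrib cis_squared by simp
  also have "\<dots> = Arg (cis (2 * a))"
    using False cos_pos by (intro Arg_times_of_real) simp
  also have "\<dots> = 2 * a"
    using arctan_bounded[of "y / x"] by (intro Arg_cis) (simp add: a_def)
  finally show ?thesis
    using False by (simp add: theta_hat_def a_def)
qed

lemma two_theta_hat_rot_eq_Arg:
  assumes "(x, y) \<noteq> (0, 0)"
  shows "2 * case_prod theta_hat (rot (x, y)) = Arg (\<i> * Complex x y ^ 2)"
proof -
  define w where "w = Complex x y * cis (pi / 4)"
  have "rot (x, y) = (Re w, Im w)"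
    by (simp add: rot_def w_def cos_45 sin_45 field_simps)
  moreover have "w ^ 2 = \<i> * Complex x y ^ 2"
    by (simp add: w_def power_mult_distrib cis_squared)
  moreover have "Complex x y \<noteq> 0"
    using assms by (simp add: Complex_eq_0)
  then have "w \<noteq> 0"
    by (simp add: w_def)
  then have "(Re w, Im w) \<noteq> (0, 0)"
    by (simp add: complex_eq_iff)
  ultimately show ?thesis
    using two_theta_hat_eq_Arg[of "Re w" "Im w"] by simp
qed

lemma cis_notin_nonpos_Reals:
  assumes "a \<in> {-pi<..<pi}"
  shows "cis a \<notin> \<real>\<^sub>\<le>\<^sub>0"
proof
  assume "cis a \<in> \<real>\<^sub>\<le>\<^sub>0"
  then have "Re (cis a) < 0 \<and> Im (cis a) = 0"
    using cis_neq_zero[of a] by (auto simp: complex_nonpos_Reals_iff complex_eq_iff simp del: cis.sel)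
  then have "Arg (cis a) = pi"
    by (simp only: Arg_eq_pi)
  then show False
    using assms Arg_cis[of a] by simp
qed

lemma tendsto_Arg_iff_tendsto_sgn:
  fixes w :: "'a \<Rightarrow> complex"
  assumes "\<forall>\<^sub>F s in F. w s \<noteq> 0" and "a \<in> {-pi<..<pi}"
  shows "((\<lambda>s. Arg (w s)) \<longlongrightarrow> a) F \<longleftrightarrow> ((\<lambda>s. sgn (w s)) \<longlongrightarrow> cis a) F"
proof
  assume "((\<lambda>s. Arg (w s)) \<longlongrightarrow> a) F"
  then have "((\<lambda>s. cis (Arg (w s))) \<longlongrightarrow> cis a) F"
    by (rule tendsto_cis)
  moreover have "\<forall>\<^sub>F s in F. cis (Arg (w s)) = sgn (w s)"
    using assms(1) by eventually_elim (rule cis_Arg)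
  ultimately show "((\<lambda>s. sgn (w s)) \<longlongrightarrow> cis a) F"
    by (rule Lim_transform_eventually)
next
  assume "((\<lambda>s. sgn (w s)) \<longlongrightarrow> cis a) F"
  moreover have "cis a \<notin> \<real>\<^sub>\<le>\<^sub>0"
    using assms(2) by (rule cis_notin_nonpos_Reals)
  ultimately have "((\<lambda>s. Arg (sgn (w s))) \<longlongrightarrow> Arg (cis a)) F"
    by (rule tendsto_Arg)
  then show "((\<lambda>s. Arg (w s)) \<longlongrightarrow> a) F"
    using assms(2) by (simp add: Arg_cis)
qed

lemma theta_one_sided_iff_tendsto_sgn:
  assumes nz: "\<forall>\<^sub>F s in F. (k1 s, k2 s) \<noteq> (0, 0)"
  shows "theta_one_sided F k1 k2 t \<longleftrightarrow>
    t \<in> {-(pi/2)<..pi/2} \<and> ((\<lambda>s. sgn (Complex (k1 s) (k2 s) ^ 2)) \<longlongrightarrow> cis (2 * t)) F"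
proof -
  define z where "z s = Complex (k1 s) (k2 s)" for s
  have z_nz: "\<forall>\<^sub>F s in F. z s \<noteq> 0"
    using nz by eventually_elim (simp add: z_def Complex_eq_0)
  have hat: "((\<lambda>s. theta_hat (k1 s) (k2 s)) \<longlongrightarrow> t) F \<longleftrightarrow>
      ((\<lambda>s. sgn (z s ^ 2)) \<longlongrightarrow> cis (2 * t)) F"
    if "t \<in> {-(pi/2)<..<pi/2}"
  proof -
    have "((\<lambda>s. theta_hat (k1 s) (k2 s)) \<longlongrightarrow> t) F \<longleftrightarrow>
        ((\<lambda>s. 2 * theta_hat (k1 s) (k2 s)) \<longlongrightarrow> 2 * t) F"
      by simp
    also have "\<dots> \<longleftrightarrow> ((\<lambda>s. Arg (z s ^ 2)) \<longlongrightarrow> 2 * t) F"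
      using nz by (intro tendsto_cong) (simp add: eventually_mono two_theta_hat_eq_Arg z_def)
    also have "\<dots> \<longleftrightarrow> ((\<lambda>s. sgn (z s ^ 2)) \<longlongrightarrow> cis (2 * t)) F"
      using z_nz that by (intro tendsto_Arg_iff_tendsto_sgn) (auto elim: eventually_mono)
    finally show ?thesis .
  qed
  have rot: "((\<lambda>s. case_prod theta_hat (rot (k1 s, k2 s))) \<longlongrightarrow> -(pi/4)) F \<longleftrightarrow>
      ((\<lambda>s. sgn (z s ^ 2)) \<longlongrightarrow> cis (2 * (pi / 2))) F"
  proof -
    have "((\<lambda>s. case_prod theta_hat (rot (k1 s, k2 s))) \<longlongrightarrow> -(pi/4)) F \<longleftrightarrow>
        ((\<lambda>s. 2 * case_prod theta_hat (rot (k1 s, k2 s))) \<longlongrightarrow> -(pi/2)) F"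
      using tendsto_mult_left_iff[of 2 _ "-(pi/4)" F] by simp
    also have "\<dots> \<longleftrightarrow> ((\<lambda>s. Arg (\<i> * z s ^ 2)) \<longlongrightarrow> -(pi/2)) F"
      using nz by (intro tendsto_cong) (simp_all add: eventually_mono two_theta_hat_rot_eq_Arg z_def)
    also have "\<dots> \<longleftrightarrow> ((\<lambda>s. sgn (\<i> * z s ^ 2)) \<longlongrightarrow> cis (-(pi/2))) F"
      using z_nz pi_gt_zero
      by (intro tendsto_Arg_iff_tendsto_sgn) (auto simp del: pi_gt_zero elim: eventually_mono)
    also have "\<dots> \<longleftrightarrow> ((\<lambda>s. \<i> * sgn (z s ^ 2)) \<longlongrightarrow> \<i> * cis pi) F"
      by (simp add: sgn_eq norm_mult)
    also have "\<dots> \<longleftrightarrow> ((\<lambda>s. sgn (z s ^ 2)) \<longlongrightarrow> cis (2 * (pi / 2))) F"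
      using tendsto_mult_left_iff[of \<i> "\<lambda>s. sgn (z s ^ 2)" "cis pi" F] by simp
    finally show ?thesis .
  qed
  consider "t \<in> {-(pi/2)<..<pi/2}" | "t = pi/2" | "t \<notin> {-(pi/2)<..pi/2}"
    by fastforce
  then show ?thesis
  proof cases
    case 1
    then show ?thesis
      using hat[OF 1] by (auto simp: theta_one_sided_def z_def)
  next
    case 2
    show ?thesis
      unfolding 2 using rot pi_gt_zero by (auto simp: theta_one_sided_def z_def simp del: pi_gt_zero)
  next
    case 3
    then show ?thesis
      using pi_gt_zero by (auto simp: theta_one_sided_def simp del: pi_gt_zero)
  qed
qed

lemma norm_eq_1_of_tendsto_sgn:
  fixes f :: "'a::perfect_space \<Rightarrow> 'b::real_normed_vector"
  assumes "((\<lambda>s. sgn (f s)) \<longlongrightarrow> c) (at x)" and "\<forall>\<^sub>F s in at x. f s \<noteq> 0"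
  shows "norm c = 1"
proof -
  have "((\<lambda>s. norm (sgn (f s))) \<longlongrightarrow> norm c) (at x)"
    using assms(1) by (rule tendsto_norm)
  moreover have "((\<lambda>s. norm (sgn (f s))) \<longlongrightarrow> 1) (at x)"
    using assms(2) by (intro tendsto_eventually) (simp add: eventually_mono norm_sgn)
  ultimately show ?thesis
    by (rule tendsto_unique[OF at_neq_bot])
qed

lemma theta_both_sides_iff_tendsto_sgn:
  fixes s0 :: real
  assumes nz: "\<forall>\<^sub>F s in at s0. (k1 s, k2 s) \<noteq> (0, 0)"
  shows "(\<exists>t. theta_one_sided (at_right s0) k1 k2 t \<and> theta_one_sided (at_left s0) k1 k2 t) \<longleftrightarrow>
    (\<exists>c. ((\<lambda>s. sgn (Complex (k1 s) (k2 s) ^ 2)) \<longlongrightarrow> c) (at s0))"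
    (is "_ \<longleftrightarrow> (\<exists>c. (?u \<longlongrightarrow> c) _)")
proof -
  have "(\<exists>t. theta_one_sided (at_right s0) k1 k2 t \<and> theta_one_sided (at_left s0) k1 k2 t) \<longleftrightarrow>
      (\<exists>t\<in>{-(pi/2)<..pi/2}. (?u \<longlongrightarrow> cis (2 * t)) (at s0))"
    using nz unfolding eventually_at_split filterlim_at_split[of ?u]
    by (auto simp: theta_one_sided_iff_tendsto_sgn)
  also have "\<dots> \<longleftrightarrow> (\<exists>c. (?u \<longlongrightarrow> c) (at s0))"
  proof
    assume "\<exists>c. (?u \<longlongrightarrow> c) (at s0)"
    then obtain c where c: "(?u \<longlongrightarrow> c) (at s0)" ..
    have "\<forall>\<^sub>F s in at s0. Complex (k1 s) (k2 s) ^ 2 \<noteq> 0"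
      using nz by eventually_elim (simp add: Complex_eq_0)
    with c have "norm c = 1"
      by (rule norm_eq_1_of_tendsto_sgn)
    moreover have "c \<noteq> 0"
      using \<open>norm c = 1\<close> by auto
    ultimately have "cis (2 * (Arg c / 2)) = c"
      by (simp add: cis_Arg sgn_eq)
    moreover have "Arg c / 2 \<in> {-(pi/2)<..pi/2}"
      using Arg_bounded[of c] by simp
    ultimately show "\<exists>t\<in>{-(pi/2)<..pi/2}. (?u \<longlongrightarrow> cis (2 * t)) (at s0)"
      using c by metis
  qed blast
  finally show ?thesis .
qed

lemma sgn_power2: "sgn (z ^ 2) = sgn z ^ 2"
  for z :: "'a::real_normed_div_algebra"
  by (simp add: power2_eq_square Real_Vector_Spaces.sgn_mult)

lemma sgn_sq_of_real_mult_cis: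
  assumes "r \<noteq> 0"
  shows "sgn ((of_real r * cis a) ^ 2) = cis (2 * a)"
proof -
  have "sgn (of_real r :: complex) ^ 2 = 1"
    using assms by (simp add: sgn_of_real sgn_real_def)
  then show ?thesis
    by (simp add: sgn_power2 Real_Vector_Spaces.sgn_mult power_mult_distrib cis_squared)
qed

lemma polar_of_cis_double_eq_sgn_sq:
  assumes "z \<noteq> 0 \<Longrightarrow> cis (2 * a) = sgn (z ^ 2)"
  shows "z = of_real (Re (z * cis (- a))) * cis a"
proof (cases "z = 0")
  case False
  define q where "q = z * cis (- a)"
  have "sgn q ^ 2 = sgn (z ^ 2) * cis (- (2 * a))"
    by (simp add: q_def sgn_power2 Real_Vector_Spaces.sgn_mult power_mult_distrib cis_squared)
  also have "\<dots> = 1"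
    unfolding assms[OF False, symmetric] by (simp add: cis_mult)
  finally have "sgn q = 1 \<or> sgn q = -1"
    by (simp add: power2_eq_1_iff)
  have "z = q * cis a"
    by (simp add: q_def mult.assoc cis_mult)
  also have "q = of_real (Re q)"
    using \<open>sgn q = 1 \<or> sgn q = -1\<close> by (auto simp: sgn_eq complex_eq_iff)
  finally show ?thesis
    by (simp only: q_def)
qed simp

lemma isCont_fun_upd_limit:
  fixes u :: "'a::t2_space \<Rightarrow> 'b::topological_space"
  assumes "(u \<longlongrightarrow> c) (at x)" and "y \<noteq> x \<Longrightarrow> isCont u y"
  shows "isCont (u(x := c)) y"
proof (cases "y = x")
  case True
  have "\<forall>\<^sub>F s in at x. u s = (u(x := c)) s"
    by (simp add: eventually_at_filter)
  then have "(u(x := c) \<longlongrightarrow> c) (at x)"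
    using assms(1) by (rule tendsto_cong[THEN iffD1])
  then show ?thesis
    using True by (simp only: isCont_def fun_upd_same)
next
  case False
  have "\<forall>\<^sub>F s in nhds y. u s = (u(x := c)) s"
    using t1_space_nhds[OF False] by eventually_elim simp
  then show ?thesis
    using assms(2)[OF False] by (rule isCont_cong[THEN iffD1])
qed

lemma continuous_half_angle_near:
  fixes u :: "'a::t2_space \<Rightarrow> complex"
  assumes "open I" "x \<in> I"
    and cont: "\<And>s. s \<in> I - {x} \<Longrightarrow> isCont u s"
    and unit: "\<And>s. s \<in> I - {x} \<Longrightarrow> norm (u s) = 1"
    and lim: "(u \<longlongrightarrow> c) (at x)" and "c \<noteq> 0"
  obtains D \<psi> where "open D" "x \<in> D" "D \<subseteq> I" "continuous_on D \<psi>"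
    "\<And>s. s \<in> D - {x} \<Longrightarrow> cis (2 * \<psi> s) = u s"
proof -
  define w where "w = u(x := c)"
  have w_cont: "isCont w s" if "s \<in> I" for s
    unfolding w_def using that by (intro isCont_fun_upd_limit[OF lim] cont) simp
  have "((\<lambda>s. Re (u s / c)) \<longlongrightarrow> Re (c / c)) (at x)"
    using lim \<open>c \<noteq> 0\<close> by (intro tendsto_intros)
  then have "\<forall>\<^sub>F s in at x. Re (u s / c) > 0"
    by (rule order_tendstoD(1)) (simp add: \<open>c \<noteq> 0\<close>)
  then obtain S where S: "open S" "x \<in> S" "\<And>s. s \<in> S \<Longrightarrow> s \<noteq> x \<Longrightarrow> Re (u s / c) > 0"
    unfolding eventually_at_topological by blast
  define D where "D = S \<inter> I"
  define \<psi> where "\<psi> s = Arg c / 2 + Arg (w s / c) / 2" for s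
  have Re_pos: "Re (w s / c) > 0" if "s \<in> D" for s
    using S(3)[of s] that \<open>c \<noteq> 0\<close> by (cases "s = x") (auto simp: D_def w_def)
  have "w s / c \<notin> \<real>\<^sub>\<le>\<^sub>0" if "s \<in> D" for s
    using Re_pos[OF that] by (auto simp: complex_nonpos_Reals_iff)
  moreover have "continuous_on D w"
    using w_cont by (intro continuous_at_imp_continuous_on) (auto simp: D_def)
  ultimately have "continuous_on D \<psi>"
    unfolding \<psi>_def by (intro continuous_intros) auto
  moreover have "cis (2 * \<psi> s) = u s" if "s \<in> D - {x}" for s
  proof -
    have "u s \<noteq> 0"
      using that unit[of s] by (auto simp: D_def)
    have "cis (2 * \<psi> s) = cis (Arg c) * cis (Arg (u s / c))"
      using that by (simp add: \<psi>_def w_def cis_mult distrib_left)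
    also have "\<dots> = sgn c * sgn (u s / c)"
      using \<open>u s \<noteq> 0\<close> \<open>c \<noteq> 0\<close> by (simp add: cis_Arg del: sgn_divide)
    also have "\<dots> = sgn (u s)"
      using \<open>c \<noteq> 0\<close> by (simp add: sgn_zero_iff)
    also have "\<dots> = u s"
      using that unit[of s] by (simp add: D_def sgn_eq)
    finally show ?thesis .
  qed
  moreover have "open D" "x \<in> D" "D \<subseteq> I"
    using S \<open>open I\<close> \<open>x \<in> I\<close> by (auto simp: D_def)
  ultimately show ?thesis
    using that by blast
qed

lemma tendsto_sgn_sq_of_polar:
  fixes f :: "'a::t2_space \<Rightarrow> complex"
  assumes "open D" "x \<in> D" "continuous_on D \<theta>"
    and polar: "\<And>s. s \<in> D \<Longrightarrow> f s = of_real (r s) * cis (\<theta> s)"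
    and nz: "\<forall>\<^sub>F s in at x. f s \<noteq> 0"
  shows "((\<lambda>s. sgn (f s ^ 2)) \<longlongrightarrow> cis (2 * \<theta> x)) (at x)"
proof -
  have "isCont \<theta> x"
    using assms(1-3) continuous_on_eq_continuous_at by blast
  then have "((\<lambda>s. cis (2 * \<theta> s)) \<longlongrightarrow> cis (2 * \<theta> x)) (at x)"
    by (intro tendsto_intros) (simp add: isCont_def)
  moreover have "\<forall>\<^sub>F s in at x. cis (2 * \<theta> s) = sgn (f s ^ 2)"
    using nz eventually_at_in_open'[OF assms(1,2)]
  proof eventually_elim
    case (elim s)
    then show ?case
      using polar[of s] by (auto simp: sgn_sq_of_real_mult_cis)
  qed
  ultimately show ?thesis
    by (rule Lim_transform_eventually)
qed

lemma polar_lift_iff_tendsto_sgn_sq: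
  fixes f :: "'a::{t2_space,perfect_space} \<Rightarrow> complex"
  assumes "open I" "x \<in> I" "continuous_on I f" "f x = 0"
    and nz: "\<And>s. s \<in> I - {x} \<Longrightarrow> f s \<noteq> 0"
  shows "(\<exists>D r \<theta>. open D \<and> x \<in> D \<and> D \<subseteq> I \<and> continuous_on D r \<and> continuous_on D \<theta> \<and>
            (\<forall>s\<in>D. f s = of_real (r s) * cis (\<theta> s)))
    \<longleftrightarrow> (\<exists>c. ((\<lambda>s. sgn (f s ^ 2)) \<longlongrightarrow> c) (at x))"
proof -
  have ev_nz: "\<forall>\<^sub>F s in at x. f s \<noteq> 0"
    using eventually_at_in_open[OF assms(1,2)] by eventually_elim (rule nz)
  show ?thesis
  proof
    assume "\<exists>D r \<theta>. open D \<and> x \<in> D \<and> D \<subseteq> I \<and> continuous_on D r \<and> continuous_on D \<theta> \<and>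
            (\<forall>s\<in>D. f s = of_real (r s) * cis (\<theta> s))"
    then obtain D r \<theta> where "open D" "x \<in> D" "continuous_on D \<theta>"
      and "\<And>s. s \<in> D \<Longrightarrow> f s = of_real (r s) * cis (\<theta> s)"
      by blast
    then show "\<exists>c. ((\<lambda>s. sgn (f s ^ 2)) \<longlongrightarrow> c) (at x)"
      using tendsto_sgn_sq_of_polar ev_nz by blast
  next
    assume "\<exists>c. ((\<lambda>s. sgn (f s ^ 2)) \<longlongrightarrow> c) (at x)"
    then obtain c where lim: "((\<lambda>s. sgn (f s ^ 2)) \<longlongrightarrow> c) (at x)" ..
    have "c \<noteq> 0"
      using norm_eq_1_of_tendsto_sgn[OF lim] ev_nz by force
    moreover have "isCont (\<lambda>s. sgn (f s ^ 2)) s" if "s \<in> I - {x}" for s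
      using assms(1,3) that nz[OF that]
      by (intro continuous_intros) (auto simp: continuous_on_eq_continuous_at)
    moreover have "norm (sgn (f s ^ 2)) = 1" if "s \<in> I - {x}" for s
      using nz[OF that] by (simp add: norm_sgn)
    ultimately obtain D \<psi> where D: "open D" "x \<in> D" "D \<subseteq> I" "continuous_on D \<psi>"
      and half_angle: "\<And>s. s \<in> D - {x} \<Longrightarrow> cis (2 * \<psi> s) = sgn (f s ^ 2)"
      using continuous_half_angle_near[OF assms(1,2) _ _ lim] by metis
    define r where "r s = Re (f s * cis (- \<psi> s))" for s
    have "continuous_on D r"
      unfolding r_def using D(3,4) continuous_on_subset[OF assms(3) D(3)] by (intro continuous_intros)
    moreover have "f s = of_real (r s) * cis (\<psi> s)" if "s \<in> D" for s
      unfolding r_def using that half_angle[of s] \<open>f x = 0\<close>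
      by (intro polar_of_cis_double_eq_sgn_sq) auto
    ultimately show "\<exists>D r \<theta>. open D \<and> x \<in> D \<and> D \<subseteq> I \<and> continuous_on D r \<and> continuous_on D \<theta> \<and>
            (\<forall>s\<in>D. f s = of_real (r s) * cis (\<theta> s))"
      using D by blast
  qed
qed

theorem lemma1:
  fixes I :: "real set" and s0 :: real and k1 k2 :: "real \<Rightarrow> real"
  assumes "open I" and "is_interval I" and "s0 \<in> I"
    and "continuous_on I k1" and "continuous_on I k2"
    and "k1 s0 = 0" and "k2 s0 = 0"
    and "\<And>s. s \<in> I \<Longrightarrow> s \<noteq> s0 \<Longrightarrow> (k1 s, k2 s) \<noteq> (0, 0)"
  shows "(\<exists>D r th. open D \<and> s0 \<in> D \<and> D \<subseteq> I \<and> continuous_on D r \<and> continuous_on D th \<and>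
            (\<forall>s\<in>D. (r s * cos (th s), r s * sin (th s)) = (k1 s, k2 s)))
         \<longleftrightarrow> (\<exists>t. theta_one_sided (at_right s0) k1 k2 t \<and> theta_one_sided (at_left s0) k1 k2 t)"
proof -
  define f where "f s = Complex (k1 s) (k2 s)" for s
  have polar_eq: "(r * cos th, r * sin th) = (k1 s, k2 s) \<longleftrightarrow> f s = of_real r * cis th" for r th s
    by (auto simp: f_def complex_eq_iff)
  have f_cont: "continuous_on I f"
    unfolding f_def Complex_eq using assms(4,5) by (intro continuous_intros)
  have f_nz: "f s \<noteq> 0" if "s \<in> I - {s0}" for s
    using assms(8) that by (simp add: f_def Complex_eq_0)
  have "\<forall>\<^sub>F s in at s0. (k1 s, k2 s) \<noteq> (0, 0)"
    using eventually_at_in_open[OF assms(1,3)] by eventually_elim (use assms(8) in auto)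
  have "(\<exists>D r th. open D \<and> s0 \<in> D \<and> D \<subseteq> I \<and> continuous_on D r \<and> continuous_on D th \<and>
            (\<forall>s\<in>D. (r s * cos (th s), r s * sin (th s)) = (k1 s, k2 s)))
      \<longleftrightarrow> (\<exists>D r th. open D \<and> s0 \<in> D \<and> D \<subseteq> I \<and> continuous_on D r \<and> continuous_on D th \<and>
            (\<forall>s\<in>D. f s = of_real (r s) * cis (th s)))"
    by (simp only: polar_eq)
  also have "\<dots> \<longleftrightarrow> (\<exists>c. ((\<lambda>s. sgn (f s ^ 2)) \<longlongrightarrow> c) (at s0))"
    using assms(6,7)
    by (intro polar_lift_iff_tendsto_sgn_sq assms(1,3) f_cont f_nz) (simp add: f_def Complex_eq_0)
  also have "\<dots> \<longleftrightarrow> (\<exists>t. theta_one_sided (at_right s0) k1 k2 t \<and> theta_one_sided (at_left s0) k1 k2 t)"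
    unfolding f_def by (rule theta_both_sides_iff_tendsto_sgn[symmetric]) fact
  finally show ?thesis .
qed

end
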